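(* Let $X$ be a real Banach space and $\alpha,\beta>0$. Then: (1) for any $x\in S_X$, a sequence $(y_n)$ is a maximizing sequence in $B_X$ (respectively $S_X$) for $\alpha x$ if and only if it is a maximizing sequence in $B_X$ (respectively $S_X$) for $\beta x$; (2) $B_X$ has property $\mathsf P$ on $\alpha S_X$ if and only if $B_X$ has property $\mathsf P$ on $\beta S_X$; (3) $S_X$ has property $\mathsf P$ on $\alpha S_X$ if and only if $S_X$ has property $\mathsf P$ on $\beta S_X$; where $\mathsf P$ is any one of: remotal, uniquely remotal, strongly remotal, SUR, USUR, sup-compact.
   Context: $B_X,S_X$ are the closed unit ball and unit sphere. For non-empty bounded $F$, $x\in X$, $\delta\ge0$: $r(F,x)=\sup_{y\in F}\|x-y\|$, $Q_F(x,\delta)=\{y\in F:\|x-y\|\ge r(F,x)-\delta\}$, $Q_F(x)=Q_F(x,0)$. A maximizing sequence in $F$ for $x$ is a sequence $(y_n)$ in $F$ with $\|x-y_n\|\to r(F,x)$. On a set $A$, $F$ is: remotal if $Q_F(x)\neq\emptyset$ for each $x\in A$; uniquely remotal if $Q_F(x)$ is a singleton for each $x\in A$; strongly remotal if for every $x\in A$ and $\epsilon>0$ there is $\delta>0$ with $Q_F(x,\delta)\subseteq Q_F(x)+\epsilon B_X$; SUR if uniquely remotal and strongly remotal; USUR if uniquely remotal and for every $\epsilon>0$ there is $\delta>0$ with $Q_F(x,\delta)\subseteq Q_F(x)+\epsilon B_X$ for all $x\in A$; sup-compact if for each $x\in A$ every maximizing sequence in $F$ for $x$ has a subsequence converging to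 an element of $F$. *)

theory Defs
  imports "HOL-Analysis.Analysis"
begin

definition rad :: "'a::real_normed_vector set \<Rightarrow> 'a \<Rightarrow> real" where
  "rad F x = (SUP y\<in>F. norm (x - y))"

definition Qd :: "'a::real_normed_vector set \<Rightarrow> 'a \<Rightarrow> real \<Rightarrow> 'a set" where
  "Qd F x \<delta> = {y \<in> F. norm (x - y) \<ge> rad F x - \<delta>}"

definition Q :: "'a::real_normed_vector set \<Rightarrow> 'a \<Rightarrow> 'a set" where
  "Q F x = Qd F x 0"

definition enlarge :: "'a::real_normed_vector set \<Rightarrow> real \<Rightarrow> 'a set" where
  "enlarge S \<epsilon> = {q + e | q e. q \<in> S \<and> e \<in> (\<lambda>b. \<epsilon> *\<^sub>R b) ` cball 0 1}"

definition maximizing :: "'a::real_normed_vector set \<Rightarrow> 'a \<Rightarrow> (nat \<Rightarrow> 'a) \<Rightarrow> bool" where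
  "maximizing F x y \<longleftrightarrow> (\<forall>n. y n \<in> F) \<and> (\<lambda>n. norm (x - y n)) \<longlonglongrightarrow> rad F x"

definition remotal_on :: "'a::real_normed_vector set \<Rightarrow> 'a set \<Rightarrow> bool" where
  "remotal_on F A \<longleftrightarrow> (\<forall>x\<in>A. Q F x \<noteq> {})"

definition uniquely_remotal_on :: "'a::real_normed_vector set \<Rightarrow> 'a set \<Rightarrow> bool" where
  "uniquely_remotal_on F A \<longleftrightarrow> (\<forall>x\<in>A. \<exists>z. Q F x = {z})"

definition strongly_remotal_on :: "'a::real_normed_vector set \<Rightarrow> 'a set \<Rightarrow> bool" where
  "strongly_remotal_on F A \<longleftrightarrow>
     (\<forall>x\<in>A. \<forall>\<epsilon>>0. \<exists>\<delta>>0. Qd F x \<delta> \<subseteq> enlarge (Q F x) \<epsilon>)"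

definition SUR_on :: "'a::real_normed_vector set \<Rightarrow> 'a set \<Rightarrow> bool" where
  "SUR_on F A \<longleftrightarrow> uniquely_remotal_on F A \<and> strongly_remotal_on F A"

definition USUR_on :: "'a::real_normed_vector set \<Rightarrow> 'a set \<Rightarrow> bool" where
  "USUR_on F A \<longleftrightarrow> uniquely_remotal_on F A \<and>
     (\<forall>\<epsilon>>0. \<exists>\<delta>>0. \<forall>x\<in>A. Qd F x \<delta> \<subseteq> enlarge (Q F x) \<epsilon>)"

definition sup_compact_on :: "'a::real_normed_vector set \<Rightarrow> 'a set \<Rightarrow> bool" where
  "sup_compact_on F A \<longleftrightarrow>
     (\<forall>x\<in>A. \<forall>y. maximizing F x y \<longrightarrow>
        (\<exists>s l. strict_mono s \<and> l \<in> F \<and> (y \<circ> s) \<longlonglongrightarrow> l))"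

end

theory Submission
  imports Defs
begin

text \<open>
  For a unit vector x and S_X \<subseteq> F \<subseteq> B_X the farthest distance from a x to F is a + 1,
  attained at -x. For y \<in> B_X the defect b + 1 - \<parallel>b x - y\<parallel> is at most max 1 (b / a) times
  the defect a + 1 - \<parallel>a x - y\<parallel>: if a \<le> b then a x - y = (a / b) (b x - y) + (1 - a / b) (-y)
  is a convex combination, and if a \<ge> b it differs from b x - y by (a - b) x. So the sets
  Q_F(a x, \<delta>) and Q_F(b x, \<delta>) are nested up to a constant independent of x, and Q_F(a x) = Q_F(b x).
\<close>

lemma remoteness_defect_scale_le:
  fixes x y :: "'a::real_normed_vector"
  assumes a: "a > 0" and b: "b > 0" and x: "norm x = 1" and y: "norm y \<le> 1"
  shows "b + 1 - norm (b *\<^sub>R x - y) \<le> max 1 (b / a) * (a + 1 - norm (a *\<^sub>R x - y))"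
proof (cases "a \<le> b")
  case True
  have "a *\<^sub>R x - y = (a / b) *\<^sub>R (b *\<^sub>R x - y) - (1 - a / b) *\<^sub>R y"
    using b by (simp add: algebra_simps)
  then have "norm (a *\<^sub>R x - y) \<le> norm ((a / b) *\<^sub>R (b *\<^sub>R x - y)) + norm ((1 - a / b) *\<^sub>R y)"
    by (metis norm_triangle_ineq4)
  also have "\<dots> \<le> (a / b) * norm (b *\<^sub>R x - y) + (1 - a / b)"
    using a b True y by (simp add: mult_left_le)
  finally have "(b / a) * norm (a *\<^sub>R x - y) \<le> (b / a) * ((a / b) * norm (b *\<^sub>R x - y) + (1 - a / b))"
    by (rule mult_left_mono) (use a b in simp)
  also have "\<dots> = norm (b *\<^sub>R x - y) + b / a - 1"
    using a b by (simp add: field_simps)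
  finally show ?thesis
    using True a by (simp add: field_simps)
next
  case False
  have "a *\<^sub>R x - y = (b *\<^sub>R x - y) + (a - b) *\<^sub>R x"
    by (simp add: algebra_simps)
  then have "norm (a *\<^sub>R x - y) \<le> norm (b *\<^sub>R x - y) + norm ((a - b) *\<^sub>R x)"
    by (metis norm_triangle_ineq)
  also have "\<dots> = norm (b *\<^sub>R x - y) + (a - b)"
    using False x by simp
  finally show ?thesis
    using False a by simp
qed

context
  fixes F :: "'a::real_normed_vector set"
  assumes sphere_subset: "sphere 0 1 \<subseteq> F" and subset_cball: "F \<subseteq> cball 0 1"
begin

lemma rad_scaleR_unit:
  assumes x: "norm x = 1" and a: "a \<ge> 0"
  shows "rad F (a *\<^sub>R x) = a + 1"
  unfolding rad_def
proof (rule cSup_eq_maximum)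
  have "a *\<^sub>R x - - x = (a + 1) *\<^sub>R x"
    by (simp add: algebra_simps)
  then have "-x \<in> F" "norm (a *\<^sub>R x - - x) = a + 1"
    using sphere_subset x a by auto
  then show "a + 1 \<in> (\<lambda>y. norm (a *\<^sub>R x - y)) ` F"
    by force
next
  fix t assume "t \<in> (\<lambda>y. norm (a *\<^sub>R x - y)) ` F"
  then obtain y where "y \<in> F" and t: "t = norm (a *\<^sub>R x - y)"
    by blast
  then have "norm y \<le> 1"
    using subset_cball by auto
  then show "t \<le> a + 1"
    using t x a norm_triangle_ineq4[of "a *\<^sub>R x" y] by simp
qed

lemma Qd_scaleR_unit_subset:
  assumes x: "norm x = 1" and a: "a > 0" and b: "b > 0"
  shows "Qd F (b *\<^sub>R x) (d / max 1 (a / b)) \<subseteq> Qd F (a *\<^sub>R x) d"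
proof
  fix y assume "y \<in> Qd F (b *\<^sub>R x) (d / max 1 (a / b))"
  then have y: "y \<in> F" and near: "b + 1 - norm (b *\<^sub>R x - y) \<le> d / max 1 (a / b)"
    unfolding Qd_def using rad_scaleR_unit[OF x, of b] b by auto
  have "a + 1 - norm (a *\<^sub>R x - y) \<le> max 1 (a / b) * (b + 1 - norm (b *\<^sub>R x - y))"
    using remoteness_defect_scale_le[OF b a x] y subset_cball by auto
  also have "\<dots> \<le> d"
    using near by (simp add: field_simps)
  finally show "y \<in> Qd F (a *\<^sub>R x) d"
    unfolding Qd_def using rad_scaleR_unit[OF x, of a] a y by auto
qed

lemma Q_scaleR_unit_eq:
  assumes "norm x = 1" and "a > 0" and "b > 0"
  shows "Q F (a *\<^sub>R x) = Q F (b *\<^sub>R x)"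
  using Qd_scaleR_unit_subset[OF assms, of 0] Qd_scaleR_unit_subset[of x b a 0] assms
  unfolding Q_def by auto

lemma Qd_enlarge_scaleR_unit:
  assumes "norm x = 1" and "a > 0" and "b > 0"
    and "Qd F (a *\<^sub>R x) d \<subseteq> enlarge (Q F (a *\<^sub>R x)) \<epsilon>"
  shows "Qd F (b *\<^sub>R x) (d / max 1 (a / b)) \<subseteq> enlarge (Q F (b *\<^sub>R x)) \<epsilon>"
  using Qd_scaleR_unit_subset[of x a b d] Q_scaleR_unit_eq[of x a b] assms by auto

lemma maximizing_scaleR_unit_imp:
  assumes x: "norm x = 1" and a: "a > 0" and b: "b > 0"
    and max_a: "maximizing F (a *\<^sub>R x) y"
  shows "maximizing F (b *\<^sub>R x) y"
proof -
  have yF: "\<And>n. y n \<in> F" and lim_a: "(\<lambda>n. norm (a *\<^sub>R x - y n)) \<longlonglongrightarrow> a + 1"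
    using max_a rad_scaleR_unit[OF x] a unfolding maximizing_def by auto
  have "(\<lambda>n. a + 1 - norm (a *\<^sub>R x - y n)) \<longlonglongrightarrow> 0"
    using tendsto_diff[OF tendsto_const[of "a + 1"] lim_a] by simp
  then have defect_a: "(\<lambda>n. max 1 (b / a) * (a + 1 - norm (a *\<^sub>R x - y n))) \<longlonglongrightarrow> 0"
    by (rule tendsto_mult_right_zero)
  have ny: "norm (y n) \<le> 1" for n
    using yF[of n] subset_cball by auto
  have "(\<lambda>n. b + 1 - norm (b *\<^sub>R x - y n)) \<longlonglongrightarrow> 0"
  proof (rule tendsto_sandwich[OF _ _ tendsto_const defect_a])
    have "norm (b *\<^sub>R x - y n) \<le> b + 1" for n
      using norm_triangle_ineq4[of "b *\<^sub>R x" "y n"] x b ny[of n] by simp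
    then show "\<forall>\<^sub>F n in sequentially. 0 \<le> b + 1 - norm (b *\<^sub>R x - y n)"
      by simp
    show "\<forall>\<^sub>F n in sequentially. b + 1 - norm (b *\<^sub>R x - y n)
        \<le> max 1 (b / a) * (a + 1 - norm (a *\<^sub>R x - y n))"
      using remoteness_defect_scale_le[OF a b x ny] by simp
  qed
  from tendsto_diff[OF tendsto_const[of "b + 1"] this]
  have "(\<lambda>n. norm (b *\<^sub>R x - y n)) \<longlonglongrightarrow> b + 1"
    by simp
  then show ?thesis
    unfolding maximizing_def using yF rad_scaleR_unit[OF x] b by auto
qed

lemma maximizing_scaleR_unit_iff:
  assumes "norm x = 1" and "a > 0" and "b > 0"
  shows "maximizing F (a *\<^sub>R x) y \<longleftrightarrow> maximizing F (b *\<^sub>R x) y"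
  using maximizing_scaleR_unit_imp[of x a b] maximizing_scaleR_unit_imp[of x b a] assms by blast

lemma remotal_on_scaleR_sphere_iff:
  assumes "a > 0" and "b > 0"
  shows "remotal_on F ((\<lambda>x. a *\<^sub>R x) ` sphere 0 1) \<longleftrightarrow>
    remotal_on F ((\<lambda>x. b *\<^sub>R x) ` sphere 0 1)"
  using Q_scaleR_unit_eq[of _ a b] assms by (simp add: remotal_on_def)

lemma uniquely_remotal_on_scaleR_sphere_iff:
  assumes "a > 0" and "b > 0"
  shows "uniquely_remotal_on F ((\<lambda>x. a *\<^sub>R x) ` sphere 0 1) \<longleftrightarrow>
    uniquely_remotal_on F ((\<lambda>x. b *\<^sub>R x) ` sphere 0 1)"
  using Q_scaleR_unit_eq[of _ a b] assms by (simp add: uniquely_remotal_on_def)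

lemma sup_compact_on_scaleR_sphere_iff:
  assumes "a > 0" and "b > 0"
  shows "sup_compact_on F ((\<lambda>x. a *\<^sub>R x) ` sphere 0 1) \<longleftrightarrow>
    sup_compact_on F ((\<lambda>x. b *\<^sub>R x) ` sphere 0 1)"
  using maximizing_scaleR_unit_iff[of _ a b] assms by (simp add: sup_compact_on_def)

lemma strongly_remotal_on_scaleR_sphere_imp:
  assumes a: "a > 0" and b: "b > 0"
    and strong_a: "strongly_remotal_on F ((\<lambda>x. a *\<^sub>R x) ` sphere 0 1)"
  shows "strongly_remotal_on F ((\<lambda>x. b *\<^sub>R x) ` sphere 0 1)"
  unfolding strongly_remotal_on_def
proof (intro ballI allI impI)
  fix z :: 'a and \<epsilon> :: real
  assume "z \<in> (\<lambda>x. b *\<^sub>R x) ` sphere 0 1" and "\<epsilon> > 0"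
  then obtain x d where x: "norm x = 1" and z: "z = b *\<^sub>R x" and "d > 0"
    and "Qd F (a *\<^sub>R x) d \<subseteq> enlarge (Q F (a *\<^sub>R x)) \<epsilon>"
    using strong_a unfolding strongly_remotal_on_def by fastforce
  then show "\<exists>\<delta>>0. Qd F z \<delta> \<subseteq> enlarge (Q F z) \<epsilon>"
    using Qd_enlarge_scaleR_unit[OF x a b] by (intro exI[of _ "d / max 1 (a / b)"]) auto
qed

lemma USUR_on_scaleR_sphere_imp:
  assumes a: "a > 0" and b: "b > 0"
    and USUR_a: "USUR_on F ((\<lambda>x. a *\<^sub>R x) ` sphere 0 1)"
  shows "USUR_on F ((\<lambda>x. b *\<^sub>R x) ` sphere 0 1)"
proof -
  have "\<exists>\<delta>>0. \<forall>z\<in>(\<lambda>x. b *\<^sub>R x) ` sphere 0 1. Qd F z \<delta> \<subseteq> enlarge (Q F z) \<epsilon>"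
    if "\<epsilon> > 0" for \<epsilon>
  proof -
    obtain d where "d > 0" and "\<forall>x\<in>sphere 0 1. Qd F (a *\<^sub>R x) d \<subseteq> enlarge (Q F (a *\<^sub>R x)) \<epsilon>"
      using USUR_a \<open>\<epsilon> > 0\<close> unfolding USUR_on_def by auto
    then show ?thesis
      using Qd_enlarge_scaleR_unit[OF _ a b] by (intro exI[of _ "d / max 1 (a / b)"]) auto
  qed
  then show ?thesis
    using USUR_a uniquely_remotal_on_scaleR_sphere_iff[OF a b] unfolding USUR_on_def by blast
qed

lemma remotality_properties_scaleR_sphere_iff:
  assumes "a > 0" and "b > 0"
  shows "\<forall>P \<in> {remotal_on, uniquely_remotal_on, strongly_remotal_on, SUR_on, USUR_on, sup_compact_on}.
    P F ((\<lambda>x. a *\<^sub>R x) ` sphere 0 1) \<longleftrightarrow> P F ((\<lambda>x. b *\<^sub>R x) ` sphere 0 1)"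
proof -
  have strong: "strongly_remotal_on F ((\<lambda>x. a *\<^sub>R x) ` sphere 0 1) \<longleftrightarrow>
      strongly_remotal_on F ((\<lambda>x. b *\<^sub>R x) ` sphere 0 1)"
    using strongly_remotal_on_scaleR_sphere_imp[of a b] strongly_remotal_on_scaleR_sphere_imp[of b a]
      assms by blast
  have "USUR_on F ((\<lambda>x. a *\<^sub>R x) ` sphere 0 1) \<longleftrightarrow> USUR_on F ((\<lambda>x. b *\<^sub>R x) ` sphere 0 1)"
    using USUR_on_scaleR_sphere_imp[of a b] USUR_on_scaleR_sphere_imp[of b a] assms by blast
  then show ?thesis
    using strong remotal_on_scaleR_sphere_iff[OF assms] uniquely_remotal_on_scaleR_sphere_iff[OF assms]
      sup_compact_on_scaleR_sphere_iff[OF assms]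
    unfolding SUR_on_def by blast
qed

end

theorem corollary2p14:
  fixes \<alpha> \<beta> :: real
  assumes "\<alpha> > 0" and "\<beta> > 0"
  shows "(\<forall>x::'a::banach. x \<in> sphere 0 1 \<longrightarrow> (\<forall>y.
            (maximizing (cball 0 1) (\<alpha> *\<^sub>R x) y \<longleftrightarrow> maximizing (cball 0 1) (\<beta> *\<^sub>R x) y) \<and>
            (maximizing (sphere 0 1) (\<alpha> *\<^sub>R x) y \<longleftrightarrow> maximizing (sphere 0 1) (\<beta> *\<^sub>R x) y)))
       \<and> (\<forall>P \<in> {remotal_on, uniquely_remotal_on, strongly_remotal_on, SUR_on, USUR_on, sup_compact_on}.
            (P (cball 0 1) ((\<lambda>x. \<alpha> *\<^sub>R x) ` sphere (0::'a) 1) \<longleftrightarrow>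
             P (cball 0 1) ((\<lambda>x. \<beta> *\<^sub>R x) ` sphere (0::'a) 1))
          \<and> (P (sphere 0 1) ((\<lambda>x. \<alpha> *\<^sub>R x) ` sphere (0::'a) 1) \<longleftrightarrow>
             P (sphere 0 1) ((\<lambda>x. \<beta> *\<^sub>R x) ` sphere (0::'a) 1)))"
proof (intro conjI allI impI)
  fix x :: 'a and y
  assume "x \<in> sphere 0 1"
  then have x: "norm x = 1"
    by simp
  show "maximizing (cball 0 1) (\<alpha> *\<^sub>R x) y \<longleftrightarrow> maximizing (cball 0 1) (\<beta> *\<^sub>R x) y"
    using maximizing_scaleR_unit_iff[OF sphere_cball order_refl x assms] .
  show "maximizing (sphere 0 1) (\<alpha> *\<^sub>R x) y \<longleftrightarrow> maximizing (sphere 0 1) (\<beta> *\<^sub>R x) y"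
    using maximizing_scaleR_unit_iff[OF order_refl sphere_cball x assms] .
next
  show "\<forall>P \<in> {remotal_on, uniquely_remotal_on, strongly_remotal_on, SUR_on, USUR_on, sup_compact_on}.
      (P (cball 0 1) ((\<lambda>x. \<alpha> *\<^sub>R x) ` sphere (0::'a) 1) \<longleftrightarrow>
       P (cball 0 1) ((\<lambda>x. \<beta> *\<^sub>R x) ` sphere (0::'a) 1))
    \<and> (P (sphere 0 1) ((\<lambda>x. \<alpha> *\<^sub>R x) ` sphere (0::'a) 1) \<longleftrightarrow>
       P (sphere 0 1) ((\<lambda>x. \<beta> *\<^sub>R x) ` sphere (0::'a) 1))"
    using remotality_properties_scaleR_sphere_iff[OF sphere_cball order_refl assms]
      remotality_properties_scaleR_sphere_iff[OF order_refl sphere_cball assms]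
    by blast
qed

end
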